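(* Let $\boldsymbol X \in \mathbb{R}^{n\times d}$, $\boldsymbol y \in \mathbb{R}^n$, $\boldsymbol M = \boldsymbol X^\top \boldsymbol X$, $\boldsymbol r = \boldsymbol X^\top \boldsymbol y$. Assume (A1) $\boldsymbol r > \mathbf 0$ and (A2) $M_{ij}\le 0$ for all $i\neq j$. Then $\boldsymbol M$ is positive definite; in particular $n\ge d$.
   Context: $\boldsymbol r>\mathbf 0$ means every coordinate of $\boldsymbol r$ is positive. *)

theory Defs
  imports "HOL-Analysis.Analysis"
begin

definition pos_def_matrix :: "real^'d^'d \<Rightarrow> bool" where
  "pos_def_matrix M \<longleftrightarrow> transpose M = M \<and> (\<forall>v. v \<noteq> 0 \<longrightarrow> v \<bullet> (M *v v) > 0)"

end

theory Submission
  imports Defs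
begin

text \<open>The Gram matrix \<open>M = X\<^sup>T X\<close> has quadratic form \<open>v \<mapsto> \<parallel>X v\<parallel>\<^sup>2\<close>, so it is
  positive definite iff \<open>X\<close> has trivial kernel, and then \<open>rank X = d \<le> n\<close>. If \<open>X v = 0\<close>
  with \<open>v \<noteq> 0\<close>, pass to \<open>w = \<bar>v\<bar>\<close>: since the off-diagonal entries of \<open>M\<close> are
  nonpositive, \<open>\<parallel>X w\<parallel>\<^sup>2 = w\<^sup>T M w \<le> v\<^sup>T M v = 0\<close>, hence \<open>X w = 0\<close> and
  \<open>r \<bullet> w = y \<bullet> X w = 0\<close>, which is impossible for \<open>r > 0\<close> and \<open>w \<ge> 0\<close>, \<open>w \<noteq> 0\<close>.\<close>

lemma quadratic_form_Gram_matrix: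
  fixes X :: "real^'d^'n"
  shows "v \<bullet> ((transpose X ** X) *v v) = (norm (X *v v))\<^sup>2"
proof -
  have "v \<bullet> ((transpose X ** X) *v v) = ((X *v v) v* X) \<bullet> v"
    by (simp add: matrix_vector_mul_assoc [symmetric] inner_commute)
  also have "\<dots> = (X *v v) \<bullet> (X *v v)"
    by (rule dot_lmul_matrix)
  finally show ?thesis
    by (simp add: power2_norm_eq_inner)
qed

lemma pos_def_Gram_matrix_iff:
  fixes X :: "real^'d^'n"
  shows "pos_def_matrix (transpose X ** X) \<longleftrightarrow> (\<forall>v. X *v v = 0 \<longrightarrow> v = 0)"
  by (auto simp: pos_def_matrix_def matrix_transpose_mul quadratic_form_Gram_matrix)

lemma quadratic_form_sum:
  fixes M :: "real^'d^'d"
  shows "v \<bullet> (M *v v) = (\<Sum>i\<in>UNIV. \<Sum>j\<in>UNIV. v$i * M$i$j * v$j)"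
  by (simp add: inner_vec_def matrix_vector_mult_def sum_distrib_left mult.assoc)

lemma quadratic_form_abs_le:
  fixes M :: "real^'d^'d"
  assumes offdiag_nonpos: "\<forall>i j. i \<noteq> j \<longrightarrow> M$i$j \<le> 0"
  shows "\<bar>v\<bar> \<bullet> (M *v \<bar>v\<bar>) \<le> v \<bullet> (M *v v)"
  unfolding quadratic_form_sum
proof (intro sum_mono)
  fix i j
  show "\<bar>v\<bar>$i * M$i$j * \<bar>v\<bar>$j \<le> v$i * M$i$j * v$j"
  proof (cases "i = j")
    case True
    then show ?thesis
      by (simp add: abs_vec_def abs_mult_self_eq)
  next
    case False
    then have "M$i$j \<le> 0"
      using offdiag_nonpos by blast
    moreover have "v$i * v$j \<le> \<bar>v$i\<bar> * \<bar>v$j\<bar>"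
      by (metis abs_ge_self abs_mult)
    ultimately have "M$i$j * (\<bar>v$i\<bar> * \<bar>v$j\<bar>) \<le> M$i$j * (v$i * v$j)"
      by (simp add: mult_left_mono_neg)
    then show ?thesis
      by (simp add: abs_vec_def algebra_simps)
  qed
qed

lemma inner_abs_pos:
  fixes r v :: "real^'d"
  assumes "\<forall>i. r$i > 0" and "v \<noteq> 0"
  shows "0 < r \<bullet> \<bar>v\<bar>"
proof -
  obtain k where "v$k \<noteq> 0"
    using \<open>v \<noteq> 0\<close> by (metis vec_eq_iff zero_index)
  then have "0 < r$k * \<bar>v$k\<bar>"
    using assms(1) by simp
  moreover have "\<forall>i\<in>UNIV. 0 \<le> r$i * \<bar>v$i\<bar>"
    using assms(1) by (simp add: less_imp_le)
  ultimately have "0 < (\<Sum>i\<in>UNIV. r$i * \<bar>v$i\<bar>)"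
    by (intro sum_pos2[where i = k]) auto
  then show ?thesis
    by (simp add: inner_vec_def abs_vec_def)
qed

lemma kernel_trivial_if_Gram_offdiag_nonpos:
  fixes X :: "real^'d^'n" and y :: "real^'n"
  assumes Xty_pos: "\<forall>i. (transpose X *v y) $ i > 0"
    and offdiag_nonpos: "\<forall>i j. i \<noteq> j \<longrightarrow> (transpose X ** X) $ i $ j \<le> 0"
    and "X *v v = 0"
  shows "v = 0"
proof (rule ccontr)
  assume "v \<noteq> 0"
  have "(norm (X *v \<bar>v\<bar>))\<^sup>2 \<le> (norm (X *v v))\<^sup>2"
    using quadratic_form_abs_le [OF offdiag_nonpos]
    by (simp only: quadratic_form_Gram_matrix)
  then have "X *v \<bar>v\<bar> = 0"
    using \<open>X *v v = 0\<close> by simp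
  then have "(transpose X *v y) \<bullet> \<bar>v\<bar> = 0"
    by (simp add: dot_lmul_matrix)
  moreover have "0 < (transpose X *v y) \<bullet> \<bar>v\<bar>"
    using Xty_pos \<open>v \<noteq> 0\<close> by (rule inner_abs_pos)
  ultimately show False
    by simp
qed

theorem proposition1:
  fixes X :: "real^'d^'n" and y :: "real^'n"
  assumes A1: "\<forall>i. (transpose X *v y) $ i > 0"
    and A2: "\<forall>i j. i \<noteq> j \<longrightarrow> (transpose X ** X) $ i $ j \<le> 0"
  shows "pos_def_matrix (transpose X ** X) \<and> CARD('n) \<ge> CARD('d)"
proof
  have kernel_trivial: "\<forall>v. X *v v = 0 \<longrightarrow> v = 0"
    using kernel_trivial_if_Gram_offdiag_nonpos [OF A1 A2] by blast
  then show "pos_def_matrix (transpose X ** X)"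
    by (simp add: pos_def_Gram_matrix_iff)
  from kernel_trivial have "rank X = CARD('d)"
    using matrix_nonfull_linear_equations_eq by blast
  then show "CARD('n) \<ge> CARD('d)"
    using rank_bound [of X] by simp
qed

end
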